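(* For $t\in(0,1)$ and $n\ge0$, $y_n'(t)=t\,r_n'(t)$.
   Context: Fix $\alpha>0$, $\beta>0$, and real $A,B$ with $A\ge0$, $A+B\ge0$, not both zero; $\theta$ is the Heaviside step function. For $t\in(0,1)$ let $w(x;t)=x^\alpha(1-x)^\beta(A+B\theta(x-t))$ on $[0,1]$, and let $P_n(x)=P_n(x;t)=x^n+\mathsf p_1(n,t)x^{n-1}+\cdots$ be the monic orthogonal polynomials: $\int_0^1P_iP_jw\,dx=h_i(t)\delta_{ij}$, $h_i>0$. Define $r_n(t)=B\,t^\alpha(1-t)^\beta P_n(t;t)P_{n-1}(t;t)/h_{n-1}$ ($r_0=0$) and $y_n(t)=\frac{\beta}{h_{n-1}}\int_0^1\frac{P_n(y)P_{n-1}(y)}{1-y}\,y^\alpha(1-y)^\beta(A+B\theta(y-t))\,dy$ ($y_0=0$). A prime denotes $d/dt$. *)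

theory Defs
  imports "HOL-Analysis.Analysis" "HOL-Computational_Algebra.Polynomial"
begin

text \<open>Heaviside step function (value at 0 is irrelevant: a null set in all integrals).\<close>
definition heaviside :: "real \<Rightarrow> real" where
  "heaviside s = (if s \<ge> 0 then 1 else 0)"

definition wgt :: "real \<Rightarrow> real \<Rightarrow> real \<Rightarrow> real \<Rightarrow> real \<Rightarrow> real \<Rightarrow> real" where
  "wgt \<alpha> \<beta> A B t x = x powr \<alpha> * (1 - x) powr \<beta> * (A + B * heaviside (x - t))"

definition OP :: "real \<Rightarrow> real \<Rightarrow> real \<Rightarrow> real \<Rightarrow> real \<Rightarrow> nat \<Rightarrow> real poly" where
  "OP \<alpha> \<beta> A B t n = (THE p. degree p = n \<and> lead_coeff p = 1 \<and>
      (\<forall>q::real poly. degree q < n \<longrightarrow>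
         integral {0..1} (\<lambda>x. poly p x * poly q x * wgt \<alpha> \<beta> A B t x) = 0))"

definition hnorm :: "real \<Rightarrow> real \<Rightarrow> real \<Rightarrow> real \<Rightarrow> real \<Rightarrow> nat \<Rightarrow> real" where
  "hnorm \<alpha> \<beta> A B t n =
     integral {0..1} (\<lambda>x. (poly (OP \<alpha> \<beta> A B t n) x)\<^sup>2 * wgt \<alpha> \<beta> A B t x)"

definition r_aux :: "real \<Rightarrow> real \<Rightarrow> real \<Rightarrow> real \<Rightarrow> nat \<Rightarrow> real \<Rightarrow> real" where
  "r_aux \<alpha> \<beta> A B n t = (if n = 0 then 0 else
     B * t powr \<alpha> * (1 - t) powr \<beta> * poly (OP \<alpha> \<beta> A B t n) t
       * poly (OP \<alpha> \<beta> A B t (n - 1)) t / hnorm \<alpha> \<beta> A B t (n - 1))"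

definition y_aux :: "real \<Rightarrow> real \<Rightarrow> real \<Rightarrow> real \<Rightarrow> nat \<Rightarrow> real \<Rightarrow> real" where
  "y_aux \<alpha> \<beta> A B n t = (if n = 0 then 0 else
     \<beta> / hnorm \<alpha> \<beta> A B t (n - 1) *
       integral {0..1} (\<lambda>y. poly (OP \<alpha> \<beta> A B t n) y * poly (OP \<alpha> \<beta> A B t (n - 1)) y
                              / (1 - y) * wgt \<alpha> \<beta> A B t y))"

end

theory Submission imports Defs begin

(* Write <p>_s for the integral of p against w(.;s) over [0,1], and P_n(.;s) for the
   monic orthogonal polynomials.  Two identities drive the proof.
   (1) Integrating d/dx [x^(alpha+1)(1-x)^beta P_n P_(n-1)] over [0,1] (the jump of
       the weight contributes a boundary term at x = s) and using orthogonality gives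
            y_n(s) = s r_n(s) - p_1(n,s),
       where p_1(n,s) is the coefficient of x^(n-1) in P_n(x;s).
   (2) Differentiating the orthogonality relation <P_n P_(n-1)>_s = 0 in s gives
            d/ds p_1(n,s) = r_n(s).
   Then y_n' = r_n + t r_n' - r_n = t r_n'. *)

section \<open>Polynomial families with coefficientwise derivatives\<close>

lemma poly_as_sum:
  fixes p :: "real poly"
  assumes "degree p \<le> N" shows "poly p x = (\<Sum>k\<le>N. coeff p k * x ^ k)"
proof -
  have "(\<Sum>k\<le>degree p. coeff p k * x ^ k) = (\<Sum>k\<le>N. coeff p k * x ^ k)"
    by (rule sum.mono_neutral_left) (use assms in \<open>auto simp: coeff_eq_0\<close>)
  then show ?thesis by (simp add: poly_altdef)
qed

lemma coeff_x_pderiv: "coeff (pCons 0 (pderiv p)) k = of_nat k * coeff (p :: real poly) k"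
  by (cases k) (auto simp: coeff_pderiv)

definition has_coeff_deriv :: "(real \<Rightarrow> real poly) \<Rightarrow> real \<Rightarrow> real poly \<Rightarrow> bool" where
  "has_coeff_deriv F t D \<longleftrightarrow> (\<forall>k. ((\<lambda>s. coeff (F s) k) has_real_derivative coeff D k) (at t))"

lemma has_coeff_derivD:
  "has_coeff_deriv F t D \<Longrightarrow> ((\<lambda>s. coeff (F s) k) has_real_derivative coeff D k) (at t)"
  by (simp add: has_coeff_deriv_def)

lemma has_coeff_deriv_coeff_const:
  assumes "has_coeff_deriv F t D" "\<And>s. coeff (F s) k = c"
  shows "coeff D k = 0"
proof -
  have "((\<lambda>s. c) has_real_derivative coeff D k) (at t)"
    using has_coeff_derivD[OF assms(1), of k] assms(2) by simp
  then show ?thesis using DERIV_const DERIV_unique by blast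
qed

lemma has_coeff_deriv_degree:
  assumes "has_coeff_deriv F t D" "\<And>s. degree (F s) \<le> N"
  shows "degree D \<le> N"
proof (rule degree_le, intro allI impI)
  fix i assume "N < i"
  then have "\<And>s. coeff (F s) i = 0" using assms(2) by (auto intro: coeff_eq_0 dest: le_less_trans)
  then show "coeff D i = 0" by (rule has_coeff_deriv_coeff_const[OF assms(1)])
qed

lemma has_coeff_deriv_const: "has_coeff_deriv (\<lambda>s. p) t 0"
  by (simp add: has_coeff_deriv_def)

lemma has_coeff_deriv_diff:
  "has_coeff_deriv F t DF \<Longrightarrow> has_coeff_deriv G t DG \<Longrightarrow>
   has_coeff_deriv (\<lambda>s. F s - G s) t (DF - DG)"
  unfolding has_coeff_deriv_def by (auto intro: DERIV_diff)

lemma has_coeff_deriv_sum: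
  assumes "\<And>j. j \<in> S \<Longrightarrow> has_coeff_deriv (F j) t (DF j)"
  shows "has_coeff_deriv (\<lambda>s. \<Sum>j\<in>S. F j s) t (\<Sum>j\<in>S. DF j)"
  unfolding has_coeff_deriv_def
proof
  fix k
  have "((\<lambda>s. \<Sum>j\<in>S. coeff (F j s) k) has_real_derivative (\<Sum>j\<in>S. coeff (DF j) k)) (at t)"
    by (intro DERIV_sum has_coeff_derivD assms)
  then show "((\<lambda>s. coeff (\<Sum>j\<in>S. F j s) k) has_real_derivative coeff (\<Sum>j\<in>S. DF j) k) (at t)"
    by (simp add: coeff_sum)
qed

lemma has_coeff_deriv_smult:
  assumes "(c has_real_derivative dc) (at t)" "has_coeff_deriv F t DF"
  shows "has_coeff_deriv (\<lambda>s. smult (c s) (F s)) t (smult dc (F t) + smult (c t) DF)"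
  unfolding has_coeff_deriv_def
proof
  fix k
  have "((\<lambda>s. c s * coeff (F s) k) has_real_derivative dc * coeff (F t) k + coeff DF k * c t) (at t)"
    by (rule DERIV_mult[OF assms(1) has_coeff_derivD[OF assms(2)]])
  then show "((\<lambda>s. coeff (smult (c s) (F s)) k) has_real_derivative
      coeff (smult dc (F t) + smult (c t) DF) k) (at t)"
    by (simp add: algebra_simps)
qed

text \<open>Product rule: the coefficients of a product are finite convolutions.\<close>
lemma has_coeff_deriv_mult:
  assumes "has_coeff_deriv F t DF" "has_coeff_deriv G t DG"
  shows "has_coeff_deriv (\<lambda>s. F s * G s) t (DF * G t + F t * DG)"
  unfolding has_coeff_deriv_def
proof
  fix k
  have "((\<lambda>s. \<Sum>i\<le>k. coeff (F s) i * coeff (G s) (k - i)) has_real_derivative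
      (\<Sum>i\<le>k. coeff DF i * coeff (G t) (k - i) + coeff (F t) i * coeff DG (k - i))) (at t)"
  proof (rule DERIV_sum)
    fix i
    have "((\<lambda>s. coeff (F s) i * coeff (G s) (k - i)) has_real_derivative
      coeff DF i * coeff (G t) (k - i) + coeff DG (k - i) * coeff (F t) i) (at t)"
      by (intro DERIV_mult has_coeff_derivD assms)
    then show "((\<lambda>s. coeff (F s) i * coeff (G s) (k - i)) has_real_derivative
      coeff DF i * coeff (G t) (k - i) + coeff (F t) i * coeff DG (k - i)) (at t)"
      by (simp add: mult.commute)
  qed
  then show "((\<lambda>s. coeff (F s * G s) k) has_real_derivative coeff (DF * G t + F t * DG) k) (at t)"
    by (simp only: coeff_mult coeff_add sum.distrib)
qed

lemma poly_diagonal_differentiable: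
  assumes "has_coeff_deriv F t D" "\<And>s. degree (F s) \<le> N"
  shows "\<exists>d. ((\<lambda>s. poly (F s) s) has_real_derivative d) (at t)"
proof -
  have "((\<lambda>s. \<Sum>k\<le>N. coeff (F s) k * s ^ k) has_real_derivative
     (\<Sum>k\<le>N. coeff D k * t ^ k + real k * (1 * t ^ (k - Suc 0)) * coeff (F t) k)) (at t)"
    by (intro DERIV_sum DERIV_mult has_coeff_derivD[OF assms(1)] DERIV_power DERIV_ident)
  then show ?thesis
    by (intro exI) (simp only: poly_as_sum[OF assms(2)])
qed

lemma DERIV_one_minus_powr:
  assumes "x < 1"
  shows "((\<lambda>x. (1 - x) powr b) has_real_derivative - (b * (1 - x) powr (b - 1))) (at x)"
proof -
  have "((\<lambda>x. 1 - x) has_real_derivative -1) (at x)"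
    using DERIV_diff[OF DERIV_const[of 1] DERIV_ident] by simp
  from DERIV_fun_powr[OF this, of b] assms show ?thesis by simp
qed

section \<open>The weight with a jump and its integrals\<close>

text \<open>The hypotheses of the theorem: they make <.>_s positive definite (A >= 0, A + B >= 0,
  not both zero) and the boundary terms at 0 and 1 vanish (alpha, beta > 0).\<close>
locale jump_jacobi =
  fixes al be A B :: real
  assumes al: "al > 0" and be: "be > 0" and A0: "A \<ge> 0" and AB: "A + B \<ge> 0"
    and nz: "\<not> (A = 0 \<and> B = 0)"
begin

definition jw :: "real \<Rightarrow> real" where "jw x = x powr al * (1 - x) powr be"

lemma wgt_eq: "wgt al be A B s x = jw x * (A + B * heaviside (x - s))"
  by (simp add: wgt_def jw_def)

lemma jw_continuous: "continuous_on {0..1} jw"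
  unfolding jw_def by (intro continuous_intros continuous_on_powr') (use al be in auto)

lemma jw_nonneg: "jw x \<ge> 0"
  by (simp add: jw_def)

lemma poly_jw_continuous: "continuous_on {0..1} (\<lambda>x. poly p x * jw x)"
  by (intro continuous_intros jw_continuous)

lemma power_jw_continuous: "continuous_on {0..1} (\<lambda>x. x ^ k * jw x)"
  by (intro continuous_intros jw_continuous)

lemma step_factor_has_integral:
  fixes f :: "real \<Rightarrow> real"
  assumes cf: "continuous_on {0..1} f" and s: "s \<in> {0..1}"
  shows "((\<lambda>x. f x * (A + B * heaviside (x - s))) has_integral
           (A * integral {0..1} f + B * integral {s..1} f)) {0..1}"
proof -
  have full: "(f has_integral integral {0..1} f) {0..1}"
    using cf integrable_continuous_real by blast
  have "continuous_on {s..1} f" by (rule continuous_on_subset[OF cf]) (use s in auto)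
  then have tail: "(f has_integral integral {s..1} f) {s..1}"
    using integrable_continuous_real by blast
  have head0: "((\<lambda>x. f x * heaviside (x - s)) has_integral 0) {0..s}"
    by (rule has_integral_spike_finite[of "{s}" _ _ "\<lambda>x. 0"]) (auto simp: heaviside_def)
  have tail': "((\<lambda>x. f x * heaviside (x - s)) has_integral integral {s..1} f) {s..1}"
    by (rule has_integral_eq[OF _ tail]) (auto simp: heaviside_def)
  have "((\<lambda>x. f x * heaviside (x - s)) has_integral integral {s..1} f) {0..1}"
    using has_integral_combine[OF _ _ head0 tail'] s by auto
  then have "((\<lambda>x. A * f x + B * (f x * heaviside (x - s))) has_integral
           (A * integral {0..1} f + B * integral {s..1} f)) {0..1}"
    by (intro has_integral_add has_integral_mult_right full)
  then show ?thesis
    by (rule has_integral_eq[rotated]) (simp add: algebra_simps)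
qed

definition wint :: "real poly \<Rightarrow> real \<Rightarrow> real" where
  "wint p s = integral {0..1} (\<lambda>x. poly p x * wgt al be A B s x)"

lemma wint_has_integral_split:
  assumes "s \<in> {0..1}"
  shows "((\<lambda>x. poly p x * wgt al be A B s x) has_integral
     (A * integral {0..1} (\<lambda>x. poly p x * jw x) + B * integral {s..1} (\<lambda>x. poly p x * jw x))) {0..1}"
  using step_factor_has_integral[OF poly_jw_continuous assms] by (simp add: wgt_eq mult.assoc)

lemma wint_eq:
  assumes "s \<in> {0..1}"
  shows "wint p s = A * integral {0..1} (\<lambda>x. poly p x * jw x) + B * integral {s..1} (\<lambda>x. poly p x * jw x)"
  unfolding wint_def using wint_has_integral_split[OF assms] by (rule integral_unique)

lemma wint_has_integral:
  "s \<in> {0..1} \<Longrightarrow> ((\<lambda>x. poly p x * wgt al be A B s x) has_integral wint p s) {0..1}"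
  unfolding wint_def using wint_has_integral_split by (blast intro: integrable_integral)

lemma wint_integrable: "s \<in> {0..1} \<Longrightarrow> (\<lambda>x. poly p x * wgt al be A B s x) integrable_on {0..1}"
  using wint_has_integral by blast

lemma wint_add: "s \<in> {0..1} \<Longrightarrow> wint (p + q) s = wint p s + wint q s"
  unfolding wint_def
  by (simp add: distrib_right integral_add wint_integrable[of s p] wint_integrable[of s q])

lemma wint_diff: "s \<in> {0..1} \<Longrightarrow> wint (p - q) s = wint p s - wint q s"
  unfolding wint_def
  by (simp add: left_diff_distrib integral_diff wint_integrable[of s p] wint_integrable[of s q])

lemma wint_smult: "wint (smult c p) s = c * wint p s"
  unfolding wint_def by (simp add: mult.assoc)

lemma wint_sum: "s \<in> {0..1} \<Longrightarrow> wint (\<Sum>j\<in>S. f j) s = (\<Sum>j\<in>S. wint (f j) s)"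
  by (induction S rule: infinite_finite_induct) (auto simp: wint_add, auto simp: wint_def)

lemma wint_commute: "wint (p * q) s = wint (q * p) s"
  by (simp add: mult.commute)

lemma square_jw_integral_pos:
  assumes p: "p \<noteq> 0" and ab: "0 \<le> a" "a < b" "b \<le> 1"
  shows "integral {a..b} (\<lambda>x. poly (p * p) x * jw x) > 0"
proof -
  have c: "continuous_on {a..b} (\<lambda>x. poly (p * p) x * jw x)"
    by (rule continuous_on_subset[OF poly_jw_continuous]) (use ab in auto)
  have nn: "\<And>x. x \<in> {a..b} \<Longrightarrow> poly (p * p) x * jw x \<ge> 0"
    by (simp add: jw_nonneg)
  have "finite {x. poly p x = 0}" using poly_roots_finite[OF p] .
  moreover have "infinite {a<..<b}" using ab by simp
  ultimately obtain x where x: "x \<in> {a<..<b}" "x \<notin> {x. poly p x = 0}"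
    by (meson finite_subset subsetI)
  have "jw x > 0" using x ab by (auto simp: jw_def)
  then have "poly (p * p) x * jw x > 0" using x by (auto simp: zero_less_mult_iff)
  then have "integral {a..b} (\<lambda>x. poly (p * p) x * jw x) \<noteq> 0"
    using integral_eq_0_iff[OF c \<open>a < b\<close> nn] x by auto
  moreover have "integral {a..b} (\<lambda>x. poly (p * p) x * jw x) \<ge> 0"
    by (intro integral_nonneg integrable_continuous_real c) (simp add: jw_nonneg)
  ultimately show ?thesis by linarith
qed

text \<open>Positive definiteness: <p^2>_s = A int_0^s p^2 jw + (A+B) int_s^1 p^2 jw > 0, using
  A >= 0, A + B >= 0 and (A,B) \<noteq> (0,0).\<close>
lemma wint_square_pos:
  assumes p: "p \<noteq> 0" and s: "s \<in> {0<..<1}"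
  shows "wint (p * p) s > 0"
proof -
  let ?g = "\<lambda>x. poly (p * p) x * jw x"
  have split: "integral {0..1} ?g = integral {0..s} ?g + integral {s..1} ?g"
    using s Henstock_Kurzweil_Integration.integral_combine[where a=0 and c=s and b=1 and f="?g"]
      integrable_continuous_real[OF poly_jw_continuous, of "p * p"] by simp
  have "wint (p * p) s = A * integral {0..1} ?g + B * integral {s..1} ?g"
    using wint_eq[of s "p * p"] s by simp
  then have e: "wint (p * p) s = A * integral {0..s} ?g + (A + B) * integral {s..1} ?g"
    unfolding split by (simp add: algebra_simps)
  have p1: "integral {0..s} ?g > 0" using square_jw_integral_pos[OF p, of 0 s] s by auto
  have p2: "integral {s..1} ?g > 0" using square_jw_integral_pos[OF p, of s 1] s by auto
  show ?thesis
  proof (cases "A = 0")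
    case True
    then have "B > 0" using nz AB by auto
    then show ?thesis using e p2 True by simp
  next
    case False
    then have "A > 0" using A0 by simp
    then show ?thesis using e p1 p2 AB
      by (smt (verit) mult_nonneg_nonneg mult_pos_pos)
  qed
qed

section \<open>Differentiating <F s>_s in s\<close>

lemma tail_moment_deriv:
  assumes t: "t \<in> {0<..<1}"
  shows "((\<lambda>s. integral {s..1} (\<lambda>x. x ^ k * jw x)) has_real_derivative -(t ^ k * jw t)) (at t)"
proof -
  let ?f = "\<lambda>x. x ^ k * jw x"
  note cf = power_jw_continuous[of k]
  have "((\<lambda>u. integral {0..u} ?f) has_vector_derivative ?f t) (at t within {0..1})"
    by (rule integral_has_vector_derivative[OF cf]) (use t in auto)
  moreover have "at t within {0..1} = at t"
    by (rule at_within_interior) (use t in simp)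
  ultimately have "((\<lambda>u. integral {0..u} ?f) has_real_derivative ?f t) (at t)"
    using has_real_derivative_iff_has_vector_derivative by metis
  then have "((\<lambda>u. integral {0..1} ?f - integral {0..u} ?f) has_real_derivative -(?f t)) (at t)"
    using DERIV_diff[OF DERIV_const] by fastforce
  then show ?thesis
  proof (rule has_field_derivative_transform_within_open[where S="{0<..<1}"])
    fix s :: real assume "s \<in> {0<..<1}"
    then show "integral {0..1} ?f - integral {0..s} ?f = integral {s..1} ?f"
      using Henstock_Kurzweil_Integration.integral_combine[where a=0 and c=s and b=1 and f="?f"]
        integrable_continuous_real[OF cf] by simp
  qed (use t in auto)
qed

lemma wint_moment_expansion:
  assumes deg: "degree p \<le> N" and s: "s \<in> {0..1}"
  shows "wint p s = (\<Sum>k\<le>N. coeff p k *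
           (A * integral {0..1} (\<lambda>x. x ^ k * jw x) + B * integral {s..1} (\<lambda>x. x ^ k * jw x)))"
proof -
  have expand: "integral {a..1} (\<lambda>x. poly p x * jw x) = (\<Sum>k\<le>N. coeff p k * integral {a..1} (\<lambda>x. x ^ k * jw x))"
    if "a \<in> {0..1}" for a
  proof -
    have ci: "(\<lambda>x. x ^ k * jw x) integrable_on {a..1}" for k
      by (rule integrable_continuous_real, rule continuous_on_subset[OF power_jw_continuous])
         (use that in auto)
    have "integral {a..1} (\<lambda>x. poly p x * jw x) = integral {a..1} (\<lambda>x. \<Sum>k\<le>N. coeff p k * (x ^ k * jw x))"
      by (rule integral_cong) (simp add: poly_as_sum[OF deg] sum_distrib_right mult.assoc)
    also have "\<dots> = (\<Sum>k\<le>N. coeff p k * integral {a..1} (\<lambda>x. x ^ k * jw x))"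
      by (subst integral_sum) (auto intro: integrable_on_mult_right ci)
    finally show ?thesis .
  qed
  show ?thesis
    using s expand[of 0] expand[of s]
    by (simp add: wint_eq sum_distrib_left sum.distrib algebra_simps)
qed

text \<open>Leibniz rule for the jump: d/ds <F s>_s = <F'>_t - B jw(t) F_t(t).  The only
  s-dependence of the weight is the jump point, which moves the tail integral.\<close>
lemma wint_family_deriv:
  assumes t: "t \<in> {0<..<1}" and dF: "has_coeff_deriv F t D" and deg: "\<And>s. degree (F s) \<le> N"
  shows "((\<lambda>s. wint (F s) s) has_real_derivative (wint D t - B * jw t * poly (F t) t)) (at t)"
proof -
  let ?m = "\<lambda>k s. A * integral {0..1} (\<lambda>x. x ^ k * jw x) + B * integral {s..1} (\<lambda>x. x ^ k * jw x)"
  have "((\<lambda>s. \<Sum>k\<le>N. coeff (F s) k * ?m k s) has_real_derivative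
     (\<Sum>k\<le>N. coeff D k * ?m k t + coeff (F t) k * (B * -(t ^ k * jw t)))) (at t)"
  proof (rule DERIV_sum)
    fix k
    have "((\<lambda>s. ?m k s) has_real_derivative 0 + B * -(t ^ k * jw t)) (at t)"
      by (intro DERIV_add DERIV_const DERIV_cmult tail_moment_deriv t)
    from DERIV_mult[OF has_coeff_derivD[OF dF] this]
    show "((\<lambda>s. coeff (F s) k * ?m k s) has_real_derivative
      coeff D k * ?m k t + coeff (F t) k * (B * - (t ^ k * jw t))) (at t)"
      by (simp add: algebra_simps)
  qed
  also have "(\<Sum>k\<le>N. coeff D k * ?m k t + coeff (F t) k * (B * -(t ^ k * jw t)))
      = wint D t - B * jw t * poly (F t) t"
  proof -
    have "wint D t = (\<Sum>k\<le>N. coeff D k * ?m k t)"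
      using t by (intro wint_moment_expansion has_coeff_deriv_degree[OF dF deg]) auto
    moreover have "B * jw t * poly (F t) t = (\<Sum>k\<le>N. B * jw t * (coeff (F t) k * t ^ k))"
      unfolding poly_as_sum[OF deg] sum_distrib_left ..
    ultimately show ?thesis
      by (simp add: sum_subtractf[symmetric] algebra_simps)
  qed
  finally show ?thesis
  proof (rule has_field_derivative_transform_within_open[where S="{0<..<1}"])
    fix s :: real assume "s \<in> {0<..<1}"
    then show "(\<Sum>k\<le>N. coeff (F s) k * ?m k s) = wint (F s) s"
      by (intro wint_moment_expansion[OF deg, symmetric]) auto
  qed (use t in auto)
qed

section \<open>Gram-Schmidt polynomials\<close>

fun gs_list :: "nat \<Rightarrow> real \<Rightarrow> real poly list" where
  "gs_list 0 s = [1]"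
| "gs_list (Suc n) s = gs_list n s @ [monom 1 (Suc n) -
     (\<Sum>j<Suc n. smult (wint (monom 1 (Suc n) * gs_list n s ! j) s /
                       wint (gs_list n s ! j * gs_list n s ! j) s) (gs_list n s ! j))]"

definition gs :: "nat \<Rightarrow> real \<Rightarrow> real poly" where "gs n s = gs_list n s ! n"

definition gs_coeff :: "nat \<Rightarrow> nat \<Rightarrow> real \<Rightarrow> real" where
  "gs_coeff n j s = wint (monom 1 n * gs j s) s / wint (gs j s * gs j s) s"

lemma gs_list_length: "length (gs_list n s) = Suc n"
  by (induction n) auto

lemma gs_list_nth: "j \<le> n \<Longrightarrow> gs_list n s ! j = gs j s"
proof (induction n)
  case 0 then show ?case by (simp add: gs_def)
next
  case (Suc n)
  then show ?case
    by (cases "j = Suc n") (simp_all add: gs_def nth_append gs_list_length)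
qed

lemma gs_rec: "gs n s = monom 1 n - (\<Sum>j<n. smult (gs_coeff n j s) (gs j s))"
proof (cases n)
  case 0 then show ?thesis by (simp add: gs_def monom_0 one_pCons)
next
  case (Suc m)
  have "gs (Suc m) s = monom 1 (Suc m) - (\<Sum>j<Suc m. smult (wint (monom 1 (Suc m) * gs_list m s ! j) s
          / wint (gs_list m s ! j * gs_list m s ! j) s) (gs_list m s ! j))"
    by (simp add: gs_def nth_append gs_list_length)
  also have "\<dots> = monom 1 (Suc m) - (\<Sum>j<Suc m. smult (gs_coeff (Suc m) j s) (gs j s))"
    by (intro arg_cong2[where f="(-)"] refl sum.cong) (auto simp: gs_list_nth gs_coeff_def)
  finally show ?thesis using Suc by simp
qed

lemma gs_coeff_high: "n \<le> k \<Longrightarrow> coeff (gs n s) k = (if k = n then 1 else 0)"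
proof (induction n arbitrary: k rule: less_induct)
  case (less n)
  have "coeff (\<Sum>j<n. smult (gs_coeff n j s) (gs j s)) k = 0"
    using less by (auto simp: coeff_sum intro!: sum.neutral)
  then show ?case
    by (subst gs_rec) (auto simp: coeff_monom)
qed

lemma gs_lead: "coeff (gs n s) n = 1"
  using gs_coeff_high[of n n s] by simp

lemma gs_degree: "degree (gs n s) = n"
proof (rule antisym)
  show "degree (gs n s) \<le> n" by (rule degree_le) (auto simp: gs_coeff_high)
  show "n \<le> degree (gs n s)" by (rule le_degree) (simp add: gs_lead)
qed

lemma gs_norm_pos: "s \<in> {0<..<1} \<Longrightarrow> wint (gs j s * gs j s) s > 0"
  by (rule wint_square_pos) (use gs_lead[of j s] in auto)

lemma gs_orth_lt:
  assumes s: "s \<in> {0<..<1}"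
  shows "j < n \<Longrightarrow> wint (gs n s * gs j s) s = 0"
proof (induction n arbitrary: j rule: less_induct)
  case (less n)
  have s': "s \<in> {0..1}" using s by auto
  have orth: "wint (gs i s * gs j s) s = 0" if "i < n" "i \<noteq> j" for i
    using less.IH[of i j] less.IH[of j i] that less.prems
    by (cases "j < i") (auto simp: wint_commute)
  have "wint (gs n s * gs j s) s
      = wint (monom 1 n * gs j s) s - (\<Sum>i<n. gs_coeff n i s * wint (gs i s * gs j s) s)"
    by (subst gs_rec) (simp add: left_diff_distrib sum_distrib_right wint_diff[OF s'] wint_sum[OF s'] wint_smult)
  also have "(\<Sum>i<n. gs_coeff n i s * wint (gs i s * gs j s) s)
      = (\<Sum>i<n. if i = j then wint (monom 1 n * gs j s) s else 0)"
    by (rule sum.cong) (use orth less.prems gs_norm_pos[OF s, of j] in \<open>auto simp: gs_coeff_def\<close>)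
  finally show ?case using less.prems by simp
qed

lemma gs_orth:
  assumes "s \<in> {0<..<1}" "i \<noteq> j"
  shows "wint (gs i s * gs j s) s = 0"
  using gs_orth_lt[OF assms(1), of i j] gs_orth_lt[OF assms(1), of j i] assms(2)
  by (cases "j < i") (auto simp: wint_commute)

text \<open>Q_n is orthogonal to every polynomial of degree below n (expand q in Q_0, ..., Q_(n-1)
  via the recursion for the monomials).\<close>
lemma gs_orth_low:
  assumes s: "s \<in> {0<..<1}" and q: "\<And>k. n \<le> k \<Longrightarrow> coeff q k = 0"
  shows "wint (gs n s * q) s = 0"
proof -
  have s': "s \<in> {0..1}" using s by auto
  have monom_orth: "wint (gs n s * monom 1 k) s = 0" if "k < n" for k
  proof -
    have "monom 1 k = gs k s + (\<Sum>j<k. smult (gs_coeff k j s) (gs j s))"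
      by (subst gs_rec) simp
    then have "wint (gs n s * monom 1 k) s
        = wint (gs n s * gs k s) s + (\<Sum>j<k. gs_coeff k j s * wint (gs n s * gs j s) s)"
      by (simp add: distrib_left sum_distrib_left wint_add[OF s'] wint_sum[OF s'] wint_smult)
    then show ?thesis using gs_orth[OF s] that by simp
  qed
  have "q = (\<Sum>k<n. monom (coeff q k) k)"
    by (rule poly_eqI) (use q in \<open>auto simp: coeff_sum coeff_monom\<close>)
  then have q_expand: "q = (\<Sum>k<n. smult (coeff q k) (monom 1 k))"
    by (simp add: smult_monom)
  have "wint (gs n s * q) s = (\<Sum>k<n. coeff q k * wint (gs n s * monom 1 k) s)"
    by (subst q_expand) (simp add: sum_distrib_left wint_sum[OF s'] wint_smult)
  then show ?thesis using monom_orth by simp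
qed

lemma gs_projection:
  assumes s: "s \<in> {0<..<1}" and R: "degree R \<le> m"
  shows "wint (R * gs m s) s = coeff R m * wint (gs m s * gs m s) s"
proof -
  have s': "s \<in> {0..1}" using s by auto
  have "wint (gs m s * (R - smult (coeff R m) (gs m s))) s = 0"
    by (rule gs_orth_low[OF s]) (use R in \<open>auto simp: gs_coeff_high coeff_eq_0\<close>)
  then show ?thesis
    by (simp add: right_diff_distrib wint_diff[OF s'] wint_smult mult.commute)
qed

text \<open>The Gram-Schmidt polynomials are the monic orthogonal polynomials: uniqueness holds
  because the difference of two candidates is orthogonal to itself.\<close>
lemma OP_eq_gs:
  assumes s: "s \<in> {0<..<1}"
  shows "OP al be A B s n = gs n s"
  unfolding OP_def
proof (rule the_equality)
  have s': "s \<in> {0..1}" using s by auto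
  show "degree (gs n s) = n \<and> lead_coeff (gs n s) = 1 \<and>
    (\<forall>q. degree q < n \<longrightarrow> integral {0..1} (\<lambda>x. poly (gs n s) x * poly q x * wgt al be A B s x) = 0)"
  proof (intro conjI allI impI)
    fix q :: "real poly" assume "degree q < n"
    then have "wint (gs n s * q) s = 0"
      by (intro gs_orth_low[OF s]) (auto intro: coeff_eq_0)
    then show "integral {0..1} (\<lambda>x. poly (gs n s) x * poly q x * wgt al be A B s x) = 0"
      by (simp add: wint_def)
  qed (simp_all add: gs_degree gs_lead)
  fix p assume p: "degree p = n \<and> lead_coeff p = 1 \<and>
    (\<forall>q. degree q < n \<longrightarrow> integral {0..1} (\<lambda>x. poly p x * poly q x * wgt al be A B s x) = 0)"
  let ?d = "p - gs n s"
  have dc: "coeff ?d k = 0" if "n \<le> k" for k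
    using p that by (cases "k = n") (auto simp: gs_coeff_high coeff_eq_0)
  show "p = gs n s"
  proof (rule ccontr)
    assume "p \<noteq> gs n s"
    then have dnz: "?d \<noteq> 0" by simp
    have "degree ?d < n"
      using dc[of "degree ?d"] dnz leading_coeff_0_iff not_less by blast
    then have "wint (p * ?d) s = 0"
      using p by (simp only: wint_def poly_mult)
    moreover have "wint (gs n s * ?d) s = 0"
      by (rule gs_orth_low[OF s]) (use dc in auto)
    ultimately have "wint (?d * ?d) s = 0"
      by (simp add: left_diff_distrib wint_diff[OF s'])
    with wint_square_pos[OF dnz s] show False by simp
  qed
qed

lemma hnorm_eq_gs: "s \<in> {0<..<1} \<Longrightarrow> hnorm al be A B s n = wint (gs n s * gs n s) s"
  by (simp add: OP_eq_gs hnorm_def wint_def power2_eq_square)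

text \<open>The Gram-Schmidt polynomials depend coefficientwise differentiably on s: by strong
  induction, each c_(n,j) is a quotient of two s-differentiable integrals
  (wint_family_deriv) with nonzero denominator.\<close>
lemma gs_has_coeff_deriv:
  assumes t: "t \<in> {0<..<1}"
  shows "\<exists>D. has_coeff_deriv (gs n) t D"
proof (induction n rule: less_induct)
  case (less n)
  have "\<exists>p. has_coeff_deriv (\<lambda>s. smult (gs_coeff n j s) (gs j s)) t p" if j: "j < n" for j
  proof -
    obtain D where D: "has_coeff_deriv (gs j) t D" using less.IH[OF j] by blast
    have degN: "degree (monom 1 n * gs j s) \<le> n + j" for s
      using degree_mult_le[of "monom (1::real) n" "gs j s"] by (simp add: gs_degree degree_monom_eq)
    have degD: "degree (gs j s * gs j s) \<le> j + j" for s
      using degree_mult_le[of "gs j s" "gs j s"] by (simp add: gs_degree)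
    note num = wint_family_deriv[OF t has_coeff_deriv_mult[OF has_coeff_deriv_const D] degN]
    note den = wint_family_deriv[OF t has_coeff_deriv_mult[OF D D] degD]
    have "wint (gs j t * gs j t) t \<noteq> 0" using gs_norm_pos[OF t, of j] by linarith
    then obtain dc where "((\<lambda>s. gs_coeff n j s) has_real_derivative dc) (at t)"
      unfolding gs_coeff_def using DERIV_divide[OF num den] by blast
    then show ?thesis using has_coeff_deriv_smult[OF _ D] by blast
  qed
  then obtain DS where DS: "\<And>j. j \<in> {..<n} \<Longrightarrow> has_coeff_deriv (\<lambda>s. smult (gs_coeff n j s) (gs j s)) t (DS j)"
    by (metis lessThan_iff)
  have "has_coeff_deriv (\<lambda>s. monom 1 n - (\<Sum>j<n. smult (gs_coeff n j s) (gs j s))) t (0 - (\<Sum>j<n. DS j))"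
    by (intro has_coeff_deriv_diff has_coeff_deriv_const has_coeff_deriv_sum DS)
  moreover have "(\<lambda>s. monom 1 n - (\<Sum>j<n. smult (gs_coeff n j s) (gs j s))) = gs n"
    by (rule ext) (simp add: gs_rec[symmetric])
  ultimately show ?case by auto
qed

section \<open>Identity (1): y_n in terms of r_n and the subleading coefficient\<close>

text \<open>The boundary function x^(alpha+1)(1-x)^beta P(x), which vanishes at 0 and 1, and its
  derivative.\<close>
definition bdry :: "real poly \<Rightarrow> real \<Rightarrow> real" where
  "bdry P x = x powr (al + 1) * (1 - x) powr be * poly P x"

definition bdry' :: "real poly \<Rightarrow> real \<Rightarrow> real" where
  "bdry' P x = (al + 1) * x powr al * (1 - x) powr be * poly P x
     + x powr (al + 1) * (1 - x) powr be * poly (pderiv P) x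
     - be * x powr (al + 1) * (1 - x) powr (be - 1) * poly P x"

lemma bdry_deriv:
  assumes x: "x \<in> {0<..<1}"
  shows "(bdry P has_real_derivative bdry' P x) (at x)"
proof -
  have "((\<lambda>x. x powr (al + 1)) has_real_derivative (al + 1) * x powr al) (at x)"
    using has_real_derivative_powr[of x "al + 1"] x by simp
  from DERIV_mult[OF DERIV_mult[OF this DERIV_one_minus_powr] poly_DERIV, of be P]
  show ?thesis using x unfolding bdry_def by (simp add: bdry'_def algebra_simps)
qed

lemma bdry_continuous: "continuous_on {0..1} (bdry P)"
  unfolding bdry_def by (intro continuous_intros continuous_on_powr') (use al be in auto)

text \<open>Fundamental theorem of calculus on [0,s] and [s,1] separately: only the jump
  at s survives.\<close>
lemma bdry'_has_integral:
  assumes s: "s \<in> {0<..<1}"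
  shows "((\<lambda>x. bdry' P x * (A + B * heaviside (x - s))) has_integral (- B * bdry P s)) {0..1}"
proof -
  have ftc: "(bdry' P has_integral (bdry P v - bdry P u)) {u..v}" if "0 \<le> u" "u \<le> v" "v \<le> 1" for u v
    by (rule fundamental_theorem_of_calculus_interior)
       (use that in \<open>auto intro: continuous_on_subset[OF bdry_continuous] bdry_deriv
                        simp: has_real_derivative_iff_has_vector_derivative[symmetric]\<close>)
  have ends: "bdry P 0 = 0" "bdry P 1 = 0" using al be by (auto simp: bdry_def)
  have left: "((\<lambda>x. bdry' P x * (A + B * heaviside (x - s))) has_integral A * bdry P s) {0..s}"
  proof (rule has_integral_spike_finite[of "{s}"])
    show "((\<lambda>x. A * bdry' P x) has_integral A * bdry P s) {0..s}"
      using has_integral_mult_right[OF ftc[of 0 s], of A] s ends by simp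
  qed (auto simp: heaviside_def)
  have right: "((\<lambda>x. bdry' P x * (A + B * heaviside (x - s))) has_integral (A + B) * (- bdry P s)) {s..1}"
  proof (rule has_integral_eq[of _ "\<lambda>x. (A + B) * bdry' P x"])
    show "((\<lambda>x. (A + B) * bdry' P x) has_integral (A + B) * (- bdry P s)) {s..1}"
      using has_integral_mult_right[OF ftc[of s 1], of "A + B"] s ends by simp
  qed (auto simp: heaviside_def algebra_simps)
  have "((\<lambda>x. bdry' P x * (A + B * heaviside (x - s))) has_integral
          (A * bdry P s + (A + B) * (- bdry P s))) {0..1}"
    using has_integral_combine[OF _ _ left right] s by auto
  then show ?thesis by (simp add: algebra_simps)
qed

lemma bdry'_pointwise:
  assumes x: "x \<in> {0<..<1}"
  shows "poly (pCons 0 P) x / (1 - x) * wgt al be A B s x =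
    (poly (smult (al + 1) P + pCons 0 (pderiv P)) x * wgt al be A B s x
      - bdry' P x * (A + B * heaviside (x - s))) / be"
proof -
  have p1: "x powr (al + 1) = x * x powr al" using x by (simp add: powr_add)
  have p2: "(1 - x) powr (be - 1) = (1 - x) powr be / (1 - x)" using x by (simp add: powr_diff)
  show ?thesis
    unfolding wgt_def bdry'_def p1 p2 using x be by (simp add: field_simps)
qed

text \<open>Integration by parts for the singular integral int_0^1 P/(1-x) w, using
  1/(1-x) = x/(1-x) + 1.\<close>
lemma one_minus_x_integral:
  assumes s: "s \<in> {0<..<1}"
  shows "((\<lambda>x. poly P x / (1 - x) * wgt al be A B s x) has_integral
     ((wint (smult (al + 1) P + pCons 0 (pderiv P)) s + B * bdry P s) / be + wint P s)) {0..1}"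
proof -
  let ?pp = "smult (al + 1) P + pCons 0 (pderiv P)"
  have s': "s \<in> {0..1}" using s by auto
  have "((\<lambda>x. (poly ?pp x * wgt al be A B s x - bdry' P x * (A + B * heaviside (x - s))) / be)
      has_integral (wint ?pp s + B * bdry P s) / be) {0..1}"
    using has_integral_mult_right[OF has_integral_diff[OF wint_has_integral[OF s', of ?pp]
        bdry'_has_integral[OF s, of P]],
        of "1 / be"]
    by simp
  then have xP: "((\<lambda>x. poly (pCons 0 P) x / (1 - x) * wgt al be A B s x) has_integral
      (wint ?pp s + B * bdry P s) / be) {0..1}"
  proof (rule has_integral_spike_finite[of "{0, 1}", rotated 2])
    fix x :: real assume "x \<in> {0..1} - {0, 1}"
    then show "poly (pCons 0 P) x / (1 - x) * wgt al be A B s x =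
      (poly ?pp x * wgt al be A B s x - bdry' P x * (A + B * heaviside (x - s))) / be"
      by (intro bdry'_pointwise) auto
  qed simp
  show ?thesis
  proof (rule has_integral_spike_finite[of "{1}", rotated 2])
    show "((\<lambda>x. poly (pCons 0 P) x / (1 - x) * wgt al be A B s x + poly P x * wgt al be A B s x)
      has_integral (wint ?pp s + B * bdry P s) / be + wint P s) {0..1}"
      by (rule has_integral_add[OF xP wint_has_integral[OF s']])
    fix x :: real assume "x \<in> {0..1} - {1}"
    then show "poly P x / (1 - x) * wgt al be A B s x =
      poly (pCons 0 P) x / (1 - x) * wgt al be A B s x + poly P x * wgt al be A B s x"
      by (simp add: field_simps)
  qed simp
qed

text \<open>For P = Q_n Q_(n-1): <(alpha+1)P + xP'>_s = -p_1(n,s) h_(n-1).  By orthogonality only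
  the x Q_n' Q_(n-1) part survives, and x Q_n' - n Q_n has degree < n with x^(n-1)
  coefficient -p_1.\<close>
lemma euler_term_pair:
  assumes s: "s \<in> {0<..<1}" and n: "n \<ge> 1"
  shows "wint (smult (al + 1) (gs n s * gs (n - 1) s) + pCons 0 (pderiv (gs n s * gs (n - 1) s))) s
       = - coeff (gs n s) (n - 1) * wint (gs (n - 1) s * gs (n - 1) s) s"
proof -
  have s': "s \<in> {0..1}" using s by auto
  define F where "F = gs n s"
  define G where "G = gs (n - 1) s"
  have FG: "wint (F * G) s = 0" unfolding F_def G_def using gs_orth[OF s, of n "n - 1"] n by simp
  have x_pderiv: "pCons 0 (pderiv (F * G)) = pCons 0 (pderiv F) * G + F * pCons 0 (pderiv G)"
    by (rule poly_ext) (simp add: pderiv_mult algebra_simps)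
  have FxG': "wint (F * pCons 0 (pderiv G)) s = 0"
    unfolding F_def
    by (rule gs_orth_low[OF s]) (use n in \<open>simp add: coeff_x_pderiv G_def gs_coeff_high\<close>)
  define R where "R = pCons 0 (pderiv F) - smult (of_nat n) F"
  have Rc: "coeff R k = (of_nat k - of_nat n) * coeff F k" for k
    by (simp add: R_def coeff_x_pderiv algebra_simps)
  have degR: "degree R \<le> n - 1"
    by (rule degree_le) (auto simp: Rc F_def gs_coeff_high)
  have "wint (pCons 0 (pderiv F) * G) s = wint (R * G) s + of_nat n * wint (F * G) s"
    by (simp add: R_def algebra_simps wint_add[OF s'] wint_diff[OF s'] wint_smult)
  also have "wint (R * G) s = coeff R (n - 1) * wint (G * G) s"
    unfolding G_def by (rule gs_projection[OF s degR])
  also have "coeff R (n - 1) = - coeff F (n - 1)"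
    unfolding Rc using n by (simp add: of_nat_diff)
  finally have xF'G: "wint (pCons 0 (pderiv F) * G) s = - coeff F (n - 1) * wint (G * G) s"
    using FG by simp
  show ?thesis
    unfolding F_def[symmetric] G_def[symmetric]
    by (simp only: wint_add[OF s'] wint_smult FG x_pderiv xF'G FxG')
qed

lemma r_aux_eq:
  assumes s: "s \<in> {0<..<1}" and n: "n \<ge> 1"
  shows "r_aux al be A B n s = B * jw s * poly (gs n s) s * poly (gs (n - 1) s) s
                                / wint (gs (n - 1) s * gs (n - 1) s) s"
  using n unfolding r_aux_def OP_eq_gs[OF s] hnorm_eq_gs[OF s] by (simp add: jw_def)

lemma y_aux_eq:
  assumes s: "s \<in> {0<..<1}" and n: "n \<ge> 1"
  shows "y_aux al be A B n s = s * r_aux al be A B n s - coeff (gs n s) (n - 1)"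
proof -
  define F where "F = gs n s"
  define G where "G = gs (n - 1) s"
  define h where "h = wint (G * G) s"
  have hpos: "h > 0" unfolding h_def G_def by (rule gs_norm_pos[OF s])
  have FG: "wint (F * G) s = 0" unfolding F_def G_def using gs_orth[OF s, of n "n - 1"] n by simp
  have "integral {0..1} (\<lambda>y. poly F y * poly G y / (1 - y) * wgt al be A B s y)
      = (wint (smult (al + 1) (F * G) + pCons 0 (pderiv (F * G))) s + B * bdry (F * G) s) / be
        + wint (F * G) s"
    using integral_unique[OF one_minus_x_integral[OF s, of "F * G"]] by simp
  also have "\<dots> = (- coeff F (n - 1) * h + B * bdry (F * G) s) / be"
    using euler_term_pair[OF s n] FG unfolding F_def G_def h_def by simp
  finally have int: "integral {0..1} (\<lambda>y. poly F y * poly G y / (1 - y) * wgt al be A B s y)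
      = (- coeff F (n - 1) * h + B * bdry (F * G) s) / be" .
  have bd: "bdry (F * G) s = s * (jw s * poly F s * poly G s)"
    using s by (simp add: bdry_def jw_def powr_add)
  have "y_aux al be A B n s = be / h * ((- coeff F (n - 1) * h + B * bdry (F * G) s) / be)"
    using n int unfolding y_aux_def OP_eq_gs[OF s] hnorm_eq_gs[OF s] F_def G_def h_def by simp
  also have "\<dots> = - coeff F (n - 1) + s * (B * jw s * poly F s * poly G s / h)"
    using hpos be unfolding bd by (simp add: field_simps)
  finally show ?thesis
    unfolding r_aux_eq[OF s n] F_def G_def h_def by simp
qed

section \<open>Identity (2): the derivative of the subleading coefficient is r_n\<close>

text \<open>Differentiate <Q_n(s) Q_(n-1)(s)>_s = 0 at t.  Since Q_n is monic of degree n, its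
  coefficientwise derivative DF has degree < n, so <DF Q_(n-1)>_t = DF_(n-1) h_(n-1), while
  <Q_n DG>_t = 0; the jump contributes -B jw(t) Q_n(t) Q_(n-1)(t).\<close>
lemma subleading_coeff_deriv:
  assumes t: "t \<in> {0<..<1}" and n: "n \<ge> 1" and DF: "has_coeff_deriv (gs n) t DF"
  shows "coeff DF (n - 1) = r_aux al be A B n t"
proof -
  have t': "t \<in> {0..1}" using t by auto
  obtain DG where DG: "has_coeff_deriv (gs (n - 1)) t DG" using gs_has_coeff_deriv[OF t] by blast
  let ?h = "wint (gs (n - 1) t * gs (n - 1) t) t"
  have hpos: "?h > 0" by (rule gs_norm_pos[OF t])
  have degFG: "degree (gs n s * gs (n - 1) s) \<le> n + (n - 1)" for s
    using degree_mult_le[of "gs n s" "gs (n - 1) s"] by (simp add: gs_degree)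
  have degDF: "degree DF \<le> n - 1"
  proof (rule degree_le, intro allI impI)
    fix k assume k: "n - 1 < k"
    show "coeff DF k = 0"
    proof (cases "k = n")
      case True
      then show ?thesis using has_coeff_deriv_coeff_const[OF DF, of n 1] by (simp add: gs_lead)
    next
      case False
      then show ?thesis
        using k has_coeff_deriv_degree[OF DF, of n] by (simp add: gs_degree coeff_eq_0)
    qed
  qed
  have degDG: "degree DG \<le> n - 1"
    by (rule has_coeff_deriv_degree[OF DG]) (simp add: gs_degree)
  have "((\<lambda>s. wint (gs n s * gs (n - 1) s) s) has_real_derivative 0) (at t)"
  proof (rule has_field_derivative_transform_within_open[OF DERIV_const[of 0], where S="{0<..<1}"])
    fix s :: real assume "s \<in> {0<..<1}"
    then show "0 = wint (gs n s * gs (n - 1) s) s" using gs_orth[of s n "n - 1"] n by simp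
  qed (use t in auto)
  then have "wint (DF * gs (n - 1) t + gs n t * DG) t - B * jw t * poly (gs n t * gs (n - 1) t) t = 0"
    using wint_family_deriv[OF t has_coeff_deriv_mult[OF DF DG] degFG] DERIV_unique by blast
  moreover have "wint (gs n t * DG) t = 0"
    by (rule gs_orth_low[OF t]) (use degDG n in \<open>auto intro: coeff_eq_0\<close>)
  moreover have "wint (DF * gs (n - 1) t) t = coeff DF (n - 1) * ?h"
    by (rule gs_projection[OF t degDF])
  ultimately have "coeff DF (n - 1) * ?h = B * jw t * poly (gs n t) t * poly (gs (n - 1) t) t"
    by (simp add: wint_add[OF t'])
  then show ?thesis
    unfolding r_aux_eq[OF t n] using hpos by (simp add: field_simps)
qed

text \<open>r_n is differentiable: on (0,1) it is built from jw, the diagonal values Q_k(s;s) and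
  h_(n-1)(s) > 0, each differentiable in s.\<close>
lemma r_aux_differentiable:
  assumes t: "t \<in> {0<..<1}" and n: "n \<ge> 1"
  shows "\<exists>D. (r_aux al be A B n has_real_derivative D) (at t)"
proof -
  obtain DF where DF: "has_coeff_deriv (gs n) t DF" using gs_has_coeff_deriv[OF t] by blast
  obtain DG where DG: "has_coeff_deriv (gs (n - 1)) t DG" using gs_has_coeff_deriv[OF t] by blast
  obtain a where da: "((\<lambda>s. poly (gs n s) s) has_real_derivative a) (at t)"
    using poly_diagonal_differentiable[OF DF, of n] by (auto simp: gs_degree)
  obtain b where db: "((\<lambda>s. poly (gs (n - 1) s) s) has_real_derivative b) (at t)"
    using poly_diagonal_differentiable[OF DG, of "n - 1"] by (auto simp: gs_degree)
  have degGG: "degree (gs (n - 1) s * gs (n - 1) s) \<le> (n - 1) + (n - 1)" for s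
    using degree_mult_le[of "gs (n - 1) s" "gs (n - 1) s"] by (simp add: gs_degree)
  note dh = wint_family_deriv[OF t has_coeff_deriv_mult[OF DG DG] degGG]
  have "((\<lambda>s. s powr al) has_real_derivative al * t powr (al - 1)) (at t)"
    using has_real_derivative_powr[of t al] t by simp
  from DERIV_mult[OF this DERIV_one_minus_powr, of be] t
  obtain dj where djw: "(jw has_real_derivative dj) (at t)"
    unfolding jw_def by auto
  define R where "R s = B * jw s * poly (gs n s) s * poly (gs (n - 1) s) s
      / wint (gs (n - 1) s * gs (n - 1) s) s" for s
  obtain D where dR: "(R has_real_derivative D) (at t)"
    unfolding R_def
    using DERIV_divide[OF DERIV_mult[OF DERIV_mult[OF DERIV_cmult[OF djw, of B] da] db] dh]
      gs_norm_pos[OF t, of "n - 1"] by fastforce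
  have "(r_aux al be A B n has_real_derivative D) (at t)"
    by (rule has_field_derivative_transform_within_open[OF dR, where S="{0<..<1}"])
       (use t r_aux_eq[OF _ n] in \<open>auto simp: R_def\<close>)
  then show ?thesis ..
qed

text \<open>y_n' = (s r_n)' - p_1' = r_n + t r_n' - r_n = t r_n'.\<close>
lemma y_aux_deriv:
  assumes t: "t \<in> {0<..<1}"
  shows "\<exists>D. (r_aux al be A B n has_real_derivative D) (at t) \<and>
             (y_aux al be A B n has_real_derivative t * D) (at t)"
proof (cases "n = 0")
  case True
  then have "r_aux al be A B n = (\<lambda>_. 0)" "y_aux al be A B n = (\<lambda>_. 0)"
    by (auto simp: r_aux_def y_aux_def)
  then show ?thesis by (auto intro: exI[of _ 0])
next
  case False
  then have n: "n \<ge> 1" by simp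
  obtain D where dr: "(r_aux al be A B n has_real_derivative D) (at t)"
    using r_aux_differentiable[OF t n] by blast
  obtain DF where DF: "has_coeff_deriv (gs n) t DF" using gs_has_coeff_deriv[OF t] by blast
  have "((\<lambda>s. s * r_aux al be A B n s - coeff (gs n s) (n - 1)) has_real_derivative
      (1 * r_aux al be A B n t + D * t) - coeff DF (n - 1)) (at t)"
    by (intro DERIV_diff DERIV_mult DERIV_ident dr has_coeff_derivD[OF DF])
  then have "((\<lambda>s. s * r_aux al be A B n s - coeff (gs n s) (n - 1)) has_real_derivative t * D) (at t)"
    using subleading_coeff_deriv[OF t n DF] by (simp add: mult.commute)
  then have "(y_aux al be A B n has_real_derivative t * D) (at t)"
    by (rule has_field_derivative_transform_within_open[where S="{0<..<1}"])
       (use t y_aux_eq[OF _ n] in auto)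
  with dr show ?thesis by blast
qed

end

theorem lemma3p2:
  fixes \<alpha> \<beta> A B t :: real and n :: nat
  assumes "\<alpha> > 0" and "\<beta> > 0" and "A \<ge> 0" and "A + B \<ge> 0" and "\<not> (A = 0 \<and> B = 0)"
    and "t \<in> {0<..<1}"
  shows "\<exists>D. (r_aux \<alpha> \<beta> A B n has_real_derivative D) (at t) \<and>
             (y_aux \<alpha> \<beta> A B n has_real_derivative t * D) (at t)"
proof -
  interpret jump_jacobi \<alpha> \<beta> A B using assms by unfold_locales auto
  show ?thesis by (rule y_aux_deriv[OF assms(6)])
qed

end
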